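(* Let $\mathbf i=(i_1,\dots,i_N)$ be a reduced expression of $w_0$ whose standard seed satisfies properties (A), (B) and (C). Let $l\in\{1,\dots,N\}$ and assume there exists $m\in\{1,\dots,N\}$ with $i_l\cdot i_m=-1$ and $m_-(\mathbf i)<l<m<l_+(\mathbf i)<m_+(\mathbf i)$. Then $P_l$ divides $\tilde P_l:=\beta_lP_{\mathrm{in}(l)}$.
   Context: $\mathfrak g$ is a complex simple Lie algebra of simply-laced type, vertex set $I=\{1,\dots,n\}$, Cartan entries $i\cdot j$, Weyl group with simple reflections $s_i$, longest element $w_0$, $N=\ell(w_0)$, fundamental weights $\omega_i$. $\overline D:\mathbb C[\mathsf N]\to\mathbb C(\alpha_1,\dots,\alpha_n)$ is the algebra morphism $\overline D(f)=\sum_{\mathbf j}(f,e_{j_1}\cdots e_{j_r})\big(\alpha_{j_1}(\alpha_{j_1}+\alpha_{j_2})\cdots(\alpha_{j_1}+\dots+\alpha_{j_r})\big)^{-1}$ ($\mathbb C[\mathsf N]$ identified with the graded dual of $U(\mathfrak n)$, $e_i$ Chevalley generators, $\alpha_i$ indeterminates). Positive roots are linear forms in the $\alpha_i$; $(\beta;P)$ = multiplicity of $\beta$ in $P$. For a reduced expression $\mathbf i$: $\beta_j=s_{i_1}\cdots s_{i_{j-1}}(\alpha_{i_j})$; $j_-(\mathbf i)=\max(\{l<j:i_l=i_j\}\cup\{0\})$; $j_+(\mathbf i)=\min(\{l>j:i_l=i_j\}\cup\{N+1\})$; $J_{ex}(\mathbf i)=\{j:j_+\le N\}$; flag minors $x_j=D(s_{i_1}\cdots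 s_{i_j}\omega_{i_j},\omega_{i_j})$. The quiver $Q^{\mathbf i}$ on $\{1,\dots,N\}$ has an ordinary arrow $u\to v$ iff $i_u\cdot i_v=-1$ and $u<v<u_+<v_+$, and a horizontal arrow $u_+\to u$ for each $u\in J_{ex}$. For $j\in J_{ex}$, $\mathrm{inord}(j)$ is the set of sources of ordinary arrows into $j$ and $P_{\mathrm{in}(j)}:=P_{j_+}\prod_{l\in\mathrm{inord}(j)}P_l$. Properties: (A) $\overline D(x_j)=1/P_j$ with $P_j$ a product of positive roots, all $j$; (B) $P_jP_{j_-}=\beta_j\prod_{l<j<l_+,\,i_l\cdot i_j=-1}P_l$ for all $j$, with $P_0=1$; (C) $(\beta_i;P_j)-(\beta_i;P_{j_+})\le1$ for all $j\in J_{ex}$, $1\le i\le N$. *)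

theory Defs
  imports Complex_Main
begin

text \<open>Root-lattice vectors: coordinates w.r.t. the simple roots alpha_1..alpha_n,
  as functions nat \<Rightarrow> int (zero outside 1..n). A positive root is such a vector,
  viewed as the linear form sum_k v k * alpha_k.
  A product of positive roots (a monomial in positive roots) is represented by its
  multiplicity function: root \<Rightarrow> int (the exponent of that root), so that
  products become sums and (beta; P) is P beta.\<close>

type_synonym vec = "nat \<Rightarrow> int"
type_synonym rootprod = "vec \<Rightarrow> int"

definition simply_laced_cartan :: "nat \<Rightarrow> (nat \<Rightarrow> nat \<Rightarrow> int) \<Rightarrow> bool" where
  "simply_laced_cartan n C \<longleftrightarrow>
     n \<ge> 1 \<and>
     (\<forall>i\<in>{1..n}. C i i = 2) \<and>
     (\<forall>i\<in>{1..n}. \<forall>j\<in>{1..n}. i \<noteq> j \<longrightarrow> C i j = C j i \<and> (C i j = 0 \<or> C i j = -1)) \<and>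
     (\<forall>x :: nat \<Rightarrow> real. (\<exists>i\<in>{1..n}. x i \<noteq> 0) \<longrightarrow>
        (\<Sum>i\<in>{1..n}. \<Sum>j\<in>{1..n}. x i * of_int (C i j) * x j) > 0) \<and>
     (\<forall>i\<in>{1..n}. \<forall>j\<in>{1..n}.
        (\<lambda>a b. a \<in> {1..n} \<and> b \<in> {1..n} \<and> C a b = -1)\<^sup>*\<^sup>* i j)"

definition simple_root :: "nat \<Rightarrow> vec" where
  "simple_root i = (\<lambda>k. if k = i then 1 else 0)"

definition sref :: "nat \<Rightarrow> (nat \<Rightarrow> nat \<Rightarrow> int) \<Rightarrow> nat \<Rightarrow> vec \<Rightarrow> vec" where
  "sref n C i v = v(i := v i - (\<Sum>k\<in>{1..n}. v k * C k i))"

definition word_act :: "nat \<Rightarrow> (nat \<Rightarrow> nat \<Rightarrow> int) \<Rightarrow> nat list \<Rightarrow> vec \<Rightarrow> vec" where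
  "word_act n C ws = foldr (\<lambda>a f. sref n C a \<circ> f) ws id"

definition is_word :: "nat \<Rightarrow> nat list \<Rightarrow> bool" where
  "is_word n ws \<longleftrightarrow> set ws \<subseteq> {1..n}"

definition reduced_word :: "nat \<Rightarrow> (nat \<Rightarrow> nat \<Rightarrow> int) \<Rightarrow> nat list \<Rightarrow> bool" where
  "reduced_word n C ws \<longleftrightarrow> is_word n ws \<and>
     (\<forall>ws'. is_word n ws' \<and> word_act n C ws' = word_act n C ws \<longrightarrow> length ws \<le> length ws')"

definition reduced_expr_w0 :: "nat \<Rightarrow> (nat \<Rightarrow> nat \<Rightarrow> int) \<Rightarrow> nat list \<Rightarrow> bool" where
  "reduced_expr_w0 n C ws \<longleftrightarrow> reduced_word n C ws \<and>
     (\<forall>ws'. reduced_word n C ws' \<longrightarrow> length ws' \<le> length ws)"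

definition roots :: "nat \<Rightarrow> (nat \<Rightarrow> nat \<Rightarrow> int) \<Rightarrow> vec set" where
  "roots n C = {word_act n C ws (simple_root i) | ws i. is_word n ws \<and> i \<in> {1..n}}"

definition pos_roots :: "nat \<Rightarrow> (nat \<Rightarrow> nat \<Rightarrow> int) \<Rightarrow> vec set" where
  "pos_roots n C = {r \<in> roots n C. \<forall>k. r k \<ge> 0}"

text \<open>1-based letter i_k of the word.\<close>
definition ix :: "nat list \<Rightarrow> nat \<Rightarrow> nat" where
  "ix ws k = ws ! (k - 1)"

definition beta :: "nat \<Rightarrow> (nat \<Rightarrow> nat \<Rightarrow> int) \<Rightarrow> nat list \<Rightarrow> nat \<Rightarrow> vec" where
  "beta n C ws j = word_act n C (take (j - 1) ws) (simple_root (ix ws j))"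

definition jminus :: "nat list \<Rightarrow> nat \<Rightarrow> nat" where
  "jminus ws j = Max ({l. 1 \<le> l \<and> l < j \<and> ix ws l = ix ws j} \<union> {0})"

definition jplus :: "nat list \<Rightarrow> nat \<Rightarrow> nat" where
  "jplus ws j = Min ({l. j < l \<and> l \<le> length ws \<and> ix ws l = ix ws j} \<union> {length ws + 1})"

definition J_ex :: "nat list \<Rightarrow> nat set" where
  "J_ex ws = {j \<in> {1..length ws}. jplus ws j \<le> length ws}"

definition ord_arrow :: "(nat \<Rightarrow> nat \<Rightarrow> int) \<Rightarrow> nat list \<Rightarrow> nat \<Rightarrow> nat \<Rightarrow> bool" where
  "ord_arrow C ws u v \<longleftrightarrow> u \<in> {1..length ws} \<and> v \<in> {1..length ws} \<and>
     C (ix ws u) (ix ws v) = -1 \<and> u < v \<and> v < jplus ws u \<and> jplus ws u < jplus ws v"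

definition inord :: "(nat \<Rightarrow> nat \<Rightarrow> int) \<Rightarrow> nat list \<Rightarrow> nat \<Rightarrow> nat set" where
  "inord C ws j = {l. ord_arrow C ws l j}"

definition P_in :: "(nat \<Rightarrow> nat \<Rightarrow> int) \<Rightarrow> nat list \<Rightarrow> (nat \<Rightarrow> rootprod) \<Rightarrow> nat \<Rightarrow> rootprod" where
  "P_in C ws P j = (\<lambda>r. P (jplus ws j) r + (\<Sum>l\<in>inord C ws j. P l r))"

definition single :: "vec \<Rightarrow> rootprod" where
  "single b = (\<lambda>r. if r = b then 1 else 0)"

end

theory Submission
  imports Defs
begin

text \<open>Fix a root; let \<open>\<delta>\<close> be its multiplicity in \<open>\<beta>\<^sub>l\<close> and \<open>\<Sigma>\<close> its total
  multiplicity in the \<open>P\<^sub>k\<close> with \<open>k \<in> inord(l)\<close>. Relation (B) at \<open>m\<close> gives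
  \<open>P\<^sub>l \<le> P\<^sub>m + \<Sigma>\<close>, because \<open>m\<^sub>-\<close> is either \<open>0\<close> or a source of an ordinary arrow into \<open>l\<close>.
  Relation (B) at \<open>l\<close> and at \<open>l\<^sub>+\<close> gives \<open>P\<^sub>m \<le> P(l\<^sub>+) + \<delta> + \<Sigma>\<close>, because
  \<open>(l\<^sub>+)\<^sub>- = l\<close> and the indices straddling \<open>l\<^sub>+\<close> include \<open>m\<close> and every index straddling
  \<open>l\<close> that is not in \<open>inord(l)\<close>. Hence \<open>P\<^sub>l \<le> P(l\<^sub>+) + \<delta> + 2\<Sigma>\<close>, which is the claim
  when \<open>\<delta> + \<Sigma> = 0\<close>. Otherwise (C) gives \<open>P\<^sub>l \<le> P(l\<^sub>+) + 1\<close> at every root \<open>\<beta>\<^sub>i\<close>,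
  while at every other root all \<open>P\<^sub>j\<close> vanish by (B).\<close>

lemma ix_in_set: "k \<in> {1..length ws} \<Longrightarrow> ix ws k \<in> set ws"
  unfolding ix_def by (rule nth_mem) auto

lemma finite_jminus_candidates:
  "finite ({l. 1 \<le> l \<and> l < j \<and> ix ws l = ix ws j} \<union> {0})"
  by (rule finite_subset[of _ "{0..j}"]) auto

lemma finite_jplus_candidates:
  "finite ({l. j < l \<and> l \<le> length ws \<and> ix ws l = ix ws j} \<union> {length ws + 1})"
  by (rule finite_subset[of _ "{0..length ws + 1}"]) auto

lemma jminus_nonzero:
  assumes "jminus ws j \<noteq> 0"
  shows "1 \<le> jminus ws j" "jminus ws j < j" "ix ws (jminus ws j) = ix ws j"
proof -
  have "jminus ws j \<in> {l. 1 \<le> l \<and> l < j \<and> ix ws l = ix ws j} \<union> {0}"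
    unfolding jminus_def by (rule Max_in[OF finite_jminus_candidates]) auto
  then show "1 \<le> jminus ws j" "jminus ws j < j" "ix ws (jminus ws j) = ix ws j"
    using assms by auto
qed

lemma jminus_less: "0 < j \<Longrightarrow> jminus ws j < j"
  using jminus_nonzero(2) by (cases "jminus ws j = 0") auto

lemma jminus_ge: "1 \<le> k \<Longrightarrow> k < j \<Longrightarrow> ix ws k = ix ws j \<Longrightarrow> k \<le> jminus ws j"
  unfolding jminus_def by (rule Max_ge[OF finite_jminus_candidates]) auto

lemma jplus_le_length:
  assumes "jplus ws j \<le> length ws"
  shows "j < jplus ws j" "ix ws (jplus ws j) = ix ws j"
proof -
  have "jplus ws j \<in> {l. j < l \<and> l \<le> length ws \<and> ix ws l = ix ws j} \<union> {length ws + 1}"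
    unfolding jplus_def by (rule Min_in[OF finite_jplus_candidates]) auto
  then show "j < jplus ws j" "ix ws (jplus ws j) = ix ws j"
    using assms by auto
qed

lemma jplus_le: "j < k \<Longrightarrow> k \<le> length ws \<Longrightarrow> ix ws k = ix ws j \<Longrightarrow> jplus ws j \<le> k"
  unfolding jplus_def by (rule Min_le[OF finite_jplus_candidates]) auto

lemma jplus_le_Suc_length: "jplus ws j \<le> length ws + 1"
  unfolding jplus_def by (rule Min_le[OF finite_jplus_candidates]) auto

lemma jminus_jplus:
  assumes "1 \<le> j" "jplus ws j \<le> length ws"
  shows "jminus ws (jplus ws j) = j"
proof (rule antisym)
  show "j \<le> jminus ws (jplus ws j)"
    using assms jplus_le_length[OF assms(2)] by (intro jminus_ge) auto
  show "jminus ws (jplus ws j) \<le> j"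
  proof (rule ccontr)
    let ?q = "jminus ws (jplus ws j)"
    assume "\<not> ?q \<le> j"
    then have "?q < jplus ws j" "ix ws ?q = ix ws j"
      using jminus_nonzero[of ws "jplus ws j"] jplus_le_length[OF assms(2)] by auto
    moreover have "jplus ws j \<le> ?q"
      using \<open>\<not> ?q \<le> j\<close> calculation assms(2) by (intro jplus_le) auto
    ultimately show False by simp
  qed
qed

lemma jplus_jminus:
  assumes "jminus ws j \<noteq> 0" "j \<le> length ws"
  shows "jplus ws (jminus ws j) = j"
proof (rule antisym)
  let ?q = "jminus ws j"
  show "jplus ws ?q \<le> j"
    using jminus_nonzero[OF assms(1)] assms(2) by (intro jplus_le) auto
  show "j \<le> jplus ws ?q"
  proof (rule ccontr)
    assume "\<not> j \<le> jplus ws ?q"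
    then have "?q < jplus ws ?q" "ix ws (jplus ws ?q) = ix ws j"
      using jplus_le_length[of ws ?q] jminus_nonzero[OF assms(1)] assms(2) by auto
    then have "jplus ws ?q \<le> ?q"
      using \<open>\<not> j \<le> jplus ws ?q\<close> jminus_nonzero[OF assms(1)] by (intro jminus_ge) auto
    with \<open>?q < jplus ws ?q\<close> show False by simp
  qed
qed

definition straddling :: "(nat \<Rightarrow> nat \<Rightarrow> int) \<Rightarrow> nat list \<Rightarrow> nat \<Rightarrow> nat set" where
  "straddling C ws j = {k. 1 \<le> k \<and> k < j \<and> j < jplus ws k \<and> C (ix ws k) (ix ws j) = -1}"

lemma straddling_subset: "straddling C ws j \<subseteq> {1..<j}"
  by (auto simp: straddling_def)

lemma finite_straddling [simp]: "finite (straddling C ws j)"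
  using finite_subset[OF straddling_subset] by blast

lemma inord_subset_straddling: "inord C ws l \<subseteq> straddling C ws l"
  by (auto simp: inord_def ord_arrow_def straddling_def)

lemma inord_subset: "inord C ws l \<subseteq> {1..length ws}"
  by (auto simp: inord_def ord_arrow_def)

lemma finite_inord [simp]: "finite (inord C ws l)"
  using finite_subset[OF inord_subset] by blast

locale root_product_recurrence =
  fixes C :: "nat \<Rightarrow> nat \<Rightarrow> int" and ws :: "nat list"
    and b :: "nat \<Rightarrow> vec" and P :: "nat \<Rightarrow> rootprod"
  assumes cartan_symmetric: "a \<in> set ws \<Longrightarrow> c \<in> set ws \<Longrightarrow> C a c = C c a"
    and cartan_diagonal: "a \<in> set ws \<Longrightarrow> C a a = 2"
    and P_0: "P 0 = (\<lambda>_. 0)"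
    and P_nonneg: "j \<in> {1..length ws} \<Longrightarrow> 0 \<le> P j r"
    and recurrence: "j \<in> {1..length ws} \<Longrightarrow>
      P j r + P (jminus ws j) r = single (b j) r + (\<Sum>k\<in>straddling C ws j. P k r)"
begin

lemma P_nonneg_upto: "j \<le> length ws \<Longrightarrow> 0 \<le> P j r"
  using P_0 P_nonneg[of j] by (cases "j = 0") auto

lemma sum_P_nonneg: "K \<subseteq> {1..length ws} \<Longrightarrow> 0 \<le> (\<Sum>k\<in>K. P k r)"
  using P_nonneg by (intro sum_nonneg) auto

lemma sum_P_mono: "finite K' \<Longrightarrow> K \<subseteq> K' \<Longrightarrow> K' \<subseteq> {1..length ws} \<Longrightarrow>
    (\<Sum>k\<in>K. P k r) \<le> (\<Sum>k\<in>K'. P k r)"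
  using P_nonneg by (intro sum_mono2) auto

lemma P_eq_0_off_b:
  assumes "\<And>i. i \<in> {1..length ws} \<Longrightarrow> r \<noteq> b i"
  shows "j \<le> length ws \<Longrightarrow> P j r = 0"
proof (induction j rule: less_induct)
  case (less j)
  show ?case
  proof (cases "j = 0")
    case True
    then show ?thesis by (simp add: P_0)
  next
    case False
    then have j: "j \<in> {1..length ws}" using less.prems by auto
    have "single (b j) r = 0" using assms[OF j] by (simp add: single_def)
    moreover have "P (jminus ws j) r = 0"
      using False less jminus_less[of j ws] by simp
    moreover have "(\<Sum>k\<in>straddling C ws j. P k r) = 0"
      using less straddling_subset[of C ws j] by (intro sum.neutral) auto
    ultimately show ?thesis using recurrence[OF j, of r] by simp
  qed
qed

context
  fixes l m :: nat
  assumes arrow: "ord_arrow C ws l m"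
begin

lemma arrow_facts:
  "l \<in> {1..length ws}" "m \<in> {1..length ws}" "l < m" "m < jplus ws l"
  "jplus ws l < jplus ws m" "C (ix ws l) (ix ws m) = -1" "C (ix ws m) (ix ws l) = -1"
  using arrow cartan_symmetric[OF ix_in_set[of l ws] ix_in_set[of m ws]]
  by (auto simp: ord_arrow_def)

lemma jplus_source_le_length: "jplus ws l \<le> length ws"
  using arrow_facts(5) jplus_le_Suc_length[of ws m] by simp

lemma target_in_straddling_jplus: "m \<in> straddling C ws (jplus ws l)"
  using arrow_facts jplus_le_length[OF jplus_source_le_length]
  by (auto simp: straddling_def)

text \<open>The successor of such an index cannot be \<open>l\<^sub>+\<close>: that would make the letter at
  \<open>l\<close> adjacent to itself.\<close>
lemma straddling_diff_inord_subset:
  "straddling C ws l - inord C ws l \<subseteq> straddling C ws (jplus ws l)"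
proof
  fix k assume k: "k \<in> straddling C ws l - inord C ws l"
  then have k_str: "1 \<le> k" "k < l" "l < jplus ws k" "C (ix ws k) (ix ws l) = -1"
    by (auto simp: straddling_def)
  have lplus: "l < jplus ws l" "ix ws (jplus ws l) = ix ws l"
    using jplus_le_length[OF jplus_source_le_length] by auto
  have "\<not> jplus ws k < jplus ws l"
    using k k_str arrow_facts(1) by (auto simp: inord_def ord_arrow_def)
  moreover have "jplus ws k \<noteq> jplus ws l"
  proof
    assume eq: "jplus ws k = jplus ws l"
    then have "ix ws k = ix ws l"
      using jplus_le_length[of ws k] jplus_source_le_length lplus(2) by auto
    then show False
      using k_str(4) cartan_diagonal[OF ix_in_set[OF arrow_facts(1)]] by simp
  qed
  ultimately show "k \<in> straddling C ws (jplus ws l)"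
    using k_str lplus by (auto simp: straddling_def)
qed

lemma P_target_le:
  "P m r \<le> P (jplus ws l) r + single (b l) r + (\<Sum>k\<in>inord C ws l. P k r)"
proof -
  let ?S = "straddling C ws l" and ?I = "inord C ws l"
  have lplus: "jplus ws l \<in> {1..length ws}"
    using jplus_source_le_length arrow_facts(4) by auto
  have "m \<notin> ?S - ?I" using arrow_facts(3) by (auto simp: straddling_def)
  then have "P m r + (\<Sum>k\<in>?S - ?I. P k r) = (\<Sum>k\<in>insert m (?S - ?I). P k r)"
    by simp
  also have "\<dots> \<le> (\<Sum>k\<in>straddling C ws (jplus ws l). P k r)"
    using straddling_diff_inord_subset target_in_straddling_jplus
      straddling_subset[of C ws "jplus ws l"] jplus_source_le_length
    by (intro sum_P_mono) auto
  also have "\<dots> \<le> P (jplus ws l) r + P l r"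
    using recurrence[OF lplus, of r] jminus_jplus[OF _ jplus_source_le_length]
      arrow_facts(1) single_def by auto
  finally have m_bound: "P m r + (\<Sum>k\<in>?S - ?I. P k r) \<le> P (jplus ws l) r + P l r" .
  have "P l r + P (jminus ws l) r = single (b l) r + (\<Sum>k\<in>?S - ?I. P k r) + (\<Sum>k\<in>?I. P k r)"
    using recurrence[OF arrow_facts(1), of r] sum.subset_diff[OF inord_subset_straddling]
    by simp
  moreover have "0 \<le> P (jminus ws l) r"
    using jminus_less[of l ws] arrow_facts(1) by (intro P_nonneg_upto) simp
  ultimately show ?thesis using m_bound by linarith
qed

lemma jminus_target_in_inord:
  assumes "jminus ws m < l" "jminus ws m \<noteq> 0"
  shows "jminus ws m \<in> inord C ws l"
  using assms arrow_facts jminus_nonzero[OF assms(2)] jplus_jminus[OF assms(2)]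
  by (auto simp: inord_def ord_arrow_def)

lemma P_source_le:
  assumes "jminus ws m < l"
  shows "P l r \<le> P m r + (\<Sum>k\<in>inord C ws l. P k r)"
proof -
  have "l \<in> straddling C ws m" using arrow_facts by (auto simp: straddling_def)
  then have "P l r \<le> (\<Sum>k\<in>straddling C ws m. P k r)"
    using straddling_subset[of C ws m] arrow_facts(2)
    by (intro sum_P_mono[of "straddling C ws m" "{l}", simplified]) auto
  also have "\<dots> \<le> P m r + P (jminus ws m) r"
    using recurrence[OF arrow_facts(2), of r] by (simp add: single_def)
  also have "P (jminus ws m) r \<le> (\<Sum>k\<in>inord C ws l. P k r)"
  proof (cases "jminus ws m = 0")
    case True
    then show ?thesis using P_0 sum_P_nonneg[OF inord_subset] by simp
  next
    case False
    then show ?thesis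
      using jminus_target_in_inord[OF assms False] inord_subset[of C ws l]
      by (intro sum_P_mono[of "inord C ws l" "{jminus ws m}", simplified]) (auto simp: inord_def)
  qed
  finally show ?thesis by simp
qed

lemma P_in_bound:
  assumes "jminus ws m < l"
    and Cl: "\<And>i. i \<in> {1..length ws} \<Longrightarrow> P l (b i) - P (jplus ws l) (b i) \<le> 1"
  shows "P l r \<le> single (b l) r + P_in C ws P l r"
proof -
  let ?\<Sigma> = "\<Sum>k\<in>inord C ws l. P k r"
  have P_in: "P_in C ws P l r = P (jplus ws l) r + ?\<Sigma>" by (simp add: P_in_def)
  have nonneg: "0 \<le> single (b l) r" "0 \<le> ?\<Sigma>" "0 \<le> P (jplus ws l) r"
    using sum_P_nonneg[OF inord_subset] P_nonneg_upto[OF jplus_source_le_length]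
    by (auto simp: single_def)
  have two_step_bound: "P l r \<le> P (jplus ws l) r + single (b l) r + 2 * ?\<Sigma>"
    using P_source_le[OF assms(1), of r] P_target_le[of r] by linarith
  show ?thesis
  proof (cases "single (b l) r + ?\<Sigma> = 0")
    case True
    then show ?thesis using two_step_bound P_in nonneg by linarith
  next
    case False
    show ?thesis
    proof (cases "\<exists>i\<in>{1..length ws}. r = b i")
      case True
      then show ?thesis using Cl False P_in nonneg by fastforce
    next
      case False
      then show ?thesis using P_eq_0_off_b arrow_facts(1) P_in nonneg by fastforce
    qed
  qed
qed

end

end

theorem proposition6p6:
  fixes n :: nat and C :: "nat \<Rightarrow> nat \<Rightarrow> int" and ws :: "nat list"
    and P :: "nat \<Rightarrow> rootprod" and l m :: nat
  assumes cartan: "simply_laced_cartan n C"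
    and red: "reduced_expr_w0 n C ws"
    and P0: "P 0 = (\<lambda>_. 0)"
    and A: "\<forall>j\<in>{1..length ws}. \<forall>r. 0 \<le> P j r \<and> (P j r \<noteq> 0 \<longrightarrow> r \<in> pos_roots n C)"
    and B: "\<forall>j\<in>{1..length ws}. \<forall>r.
              P j r + P (jminus ws j) r =
              single (beta n C ws j) r +
              (\<Sum>k\<in>{k. 1 \<le> k \<and> k < j \<and> j < jplus ws k \<and> C (ix ws k) (ix ws j) = -1}. P k r)"
    and Cc: "\<forall>j\<in>J_ex ws. \<forall>i\<in>{1..length ws}.
              P j (beta n C ws i) - P (jplus ws j) (beta n C ws i) \<le> 1"
    and l: "l \<in> {1..length ws}" and m: "m \<in> {1..length ws}"
    and lm: "C (ix ws l) (ix ws m) = -1"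
    and ord: "jminus ws m < l" "l < m" "m < jplus ws l" "jplus ws l < jplus ws m"
  shows "\<forall>r. P l r \<le> single (beta n C ws l) r + P_in C ws P l r"
proof
  fix r
  have letters: "set ws \<subseteq> {1..n}"
    using red by (simp add: reduced_expr_w0_def reduced_word_def is_word_def)
  have symmetric: "\<forall>i\<in>{1..n}. \<forall>j\<in>{1..n}. i \<noteq> j \<longrightarrow> C i j = C j i"
    and diagonal: "\<forall>i\<in>{1..n}. C i i = 2"
    using cartan unfolding simply_laced_cartan_def by blast+
  interpret root_product_recurrence C ws "beta n C ws" P
  proof
    show "C a c = C c a" if "a \<in> set ws" "c \<in> set ws" for a c
    proof -
      have "a \<in> {1..n}" "c \<in> {1..n}" using that letters by auto
      then show ?thesis using symmetric by (cases "a = c") auto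
    qed
    show "C a a = 2" if "a \<in> set ws" for a
      using that letters diagonal by auto
  qed (use P0 A B in \<open>auto simp: straddling_def\<close>)
  have arrow: "ord_arrow C ws l m"
    using l m lm ord by (simp add: ord_arrow_def)
  have "l \<in> J_ex ws"
    using l jplus_source_le_length[OF arrow] by (simp add: J_ex_def)
  then show "P l r \<le> single (beta n C ws l) r + P_in C ws P l r"
    using P_in_bound[OF arrow ord(1)] Cc by blast
qed

end
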